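(* Let $g\le3$ and let $W$ be a $\mathbb{C}$-vector space of dimension $g$ of quadratic forms on $\mathbb{C}^g$, containing a non-degenerate quadratic form. Then there exists a vector $v\in\mathbb{C}^g$ which is not in the kernel of any non-zero quadratic form in $W$.
   Context: The kernel of a quadratic form $q$ on $\mathbb{C}^g$ is the kernel of its associated symmetric bilinear form (equivalently of its symmetric matrix). *)

theory Defs
  imports "HOL-Analysis.Analysis"
begin

text \<open>Quadratic forms on C^g are represented by their symmetric g x g complex
matrices. The space of g x g complex matrices is a C-vector space via
entrywise scalar multiplication.\<close>

definition cmat_scale :: "complex \<Rightarrow> complex^'n^'n \<Rightarrow> complex^'n^'n" where
  "cmat_scale c A = (\<chi> i j. c * A $ i $ j)"

interpretation cmat: vector_space cmat_scale
  by unfold_locales (simp_all add: cmat_scale_def vec_eq_iff algebra_simps)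

text \<open>A quadratic form (symmetric matrix) is non-degenerate iff its matrix is invertible.\<close>
definition symmetric_mat :: "complex^'n^'n \<Rightarrow> bool" where
  "symmetric_mat A \<longleftrightarrow> transpose A = A"

definition qf_kernel :: "complex^'n^'n \<Rightarrow> (complex^'n) set" where
  "qf_kernel A = {v. A *v v = 0}"

end

theory Submission
  imports Defs "HOL-Computational_Algebra.Polynomial"
begin

(* Suppose, for a contradiction, that every vector is killed by a nonzero member of W, and let A0 \<in> W
  be invertible. For g = 1 this is absurd since W = span {A0}. For g = 2, with W = span {A0, A1},
  it says that A1 v \<in> span {A0 v} for every v; then every vector is an eigenvector of A0^-1 A1,
  which is therefore scalar, and A1 \<in> span {A0}.
  For g = 3 take A1 \<notin> span {A0} and a generic v0, with A0 v0, A1 v0 independent and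
  v0^T A0 v0 \<noteq> 0. A member N killing v0 completes A0, A1 to a basis of W, and the hypothesis
  becomes det (A0 v, A1 v, N v) = 0 for all v. Polarising this at v0 shows that the symmetric
  matrix N has rank one, with image a line C y. Then det (A0 v, A1 v, y) vanishes identically,
  which makes A1 A0^-1 a scalar \<mu> modulo y; so A1 - \<mu> A0 and N are symmetric matrices with image
  in the same line, hence proportional, contradicting the independence of A0, A1, N. *)

section \<open>Linear algebra of matrices\<close>

lemma cmat_scale_mult_vec: "cmat_scale c A *v v = c *s (A *v v)"
  by (simp add: cmat_scale_def matrix_vector_mult_def vec_eq_iff sum_distrib_left mult.assoc)

lemma cmat_span_singleton: "x \<in> cmat.span {a} \<longleftrightarrow> (\<exists>\<alpha>. x = cmat_scale \<alpha> a)"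
  by (auto simp: cmat.span_singleton)

lemma cmat_span_pair:
  "x \<in> cmat.span {a, b} \<longleftrightarrow> (\<exists>\<alpha> \<beta>. x = cmat_scale \<alpha> a + cmat_scale \<beta> b)"
  unfolding cmat.span_insert[of a] cmat_span_singleton
  by (auto simp: diff_eq_eq) (metis add.commute)+

lemma cmat_span_triple:
  "x \<in> cmat.span {a, b, c} \<longleftrightarrow>
    (\<exists>\<alpha> \<beta> \<gamma>. x = cmat_scale \<alpha> a + cmat_scale \<beta> b + cmat_scale \<gamma> c)"
  unfolding cmat.span_insert[of a] cmat_span_pair
  by (auto simp: diff_eq_eq) (metis add.commute add.assoc)+

lemma cmat_subset_span_if_card_eq_dim:
  assumes "cmat.dim W = card B" "B \<noteq> {}" "finite B" "B \<subseteq> W" "cmat.independent B"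
  shows "W \<subseteq> cmat.span B"
proof
  fix X assume "X \<in> W"
  show "X \<in> cmat.span B"
  proof (rule ccontr)
    assume X: "X \<notin> cmat.span B"
    obtain C where C: "C \<subseteq> W" "W \<subseteq> cmat.span C" "card C = cmat.dim W"
      by (rule cmat.basis_exists)
    have "finite C" using C(3) assms(1-3) by (metis card_gt_0_iff)
    moreover have "cmat.independent (insert X B)"
      by (rule cmat.independent_insertI[OF X assms(5)])
    moreover have "insert X B \<subseteq> cmat.span C" using C(2) \<open>X \<in> W\<close> assms(4) by auto
    ultimately have "card (insert X B) \<le> card C" using cmat.independent_span_bound by blast
    moreover have "X \<notin> B" using X cmat.span_base by blast
    ultimately show False using assms(1,3) C(3) by simp
  qed
qed

lemma cmat_exists_outside_span_singleton:
  assumes "cmat.dim W > 1"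
  obtains A1 where "A1 \<in> W" "A1 \<notin> cmat.span {A0}"
proof -
  have "\<not> W \<subseteq> cmat.span {A0}"
    using cmat.dim_le_card[of W "{A0}"] assms by auto
  then show ?thesis using that by blast
qed

lemma cmat_independent_pair:
  assumes "A0 \<noteq> 0" "A1 \<notin> cmat.span {A0}"
  shows "cmat.independent {A1, A0}" "A1 \<noteq> A0"
proof -
  show "cmat.independent {A1, A0}"
    using assms by (intro cmat.independent_insertI) (auto simp: cmat.independent_empty)
  show "A1 \<noteq> A0" using assms(2) cmat.span_base by blast
qed

lemma cmat_subset_span_triple:
  assumes "cmat.dim W = 3" "A0 \<noteq> 0" "A1 \<notin> cmat.span {A0}" "N \<notin> cmat.span {A1, A0}"
    and "N \<in> W" "A1 \<in> W" "A0 \<in> W"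
  shows "W \<subseteq> cmat.span {N, A1, A0}"
proof (rule cmat_subset_span_if_card_eq_dim)
  have "N \<noteq> A1" "N \<noteq> A0" using assms(4) cmat.span_base by blast+
  then show "cmat.dim W = card {N, A1, A0}"
    using assms(1) cmat_independent_pair(2)[OF assms(2,3)] by simp
  show "cmat.independent {N, A1, A0}"
    using assms(4) cmat_independent_pair(1)[OF assms(2,3)] by (rule cmat.independent_insertI)
qed (use assms(5-7) in auto)

lemma invertible_mult_vec_eq_0:
  fixes A :: "'a::field^'n^'n"
  assumes "invertible A" "A *v v = 0"
  shows "v = 0"
  using assms matrix_left_invertible_ker invertible_left_inverse by blast

lemma invertible_nonzero:
  fixes A :: "'a::field^'n^'n"
  assumes "invertible A"
  shows "A \<noteq> 0"
  using invertible_mult_vec_eq_0[OF assms, of "axis undefined 1"] by (auto simp: axis_eq_0_iff)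

lemma vector_solve_combination:
  fixes x u :: "'a::field^'n"
  assumes "\<alpha> \<noteq> 0" "\<alpha> *s x + u = 0"
  shows "x = (- inverse \<alpha>) *s u"
proof -
  have "\<alpha> * x $ i + u $ i = 0" for i using arg_cong[OF assms(2), of "\<lambda>v. v $ i"] by simp
  then show ?thesis using assms(1) by (simp add: vec_eq_iff field_simps eq_neg_iff_add_eq_0)
qed

lemma mat_eq_scalar_if_all_eigenvectors:
  fixes G :: "complex^'n^'n"
  assumes "\<And>v. \<exists>c. G *v v = c *s v"
  obtains c where "\<And>v. G *v v = c *s v"
proof -
  have col: "(G *v axis j 1) $ k = G $ k $ j" for j k
    by (simp add: matrix_vector_mult_def axis_def if_distrib cong: if_cong)
  have "\<forall>j. \<exists>c. G *v axis j 1 = c *s axis j 1" using assms by blast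
  then obtain c where c: "\<And>j. G *v axis j 1 = c j *s axis j 1"
    by (metis choice)
  have offdiag: "G $ k $ j = 0" if "k \<noteq> j" for k j
    using c[of j] col[of j k] that by (simp add: vec_eq_iff axis_def)
  have diag: "G $ j $ j = c j" for j
    using c[of j] col[of j j] by (simp add: vec_eq_iff axis_def)
  have c_const: "c j = c k" for j k
  proof (cases "j = k")
    case False
    obtain d where d: "G *v (axis j 1 + axis k 1) = d *s (axis j 1 + axis k 1)"
      using assms by blast
    have "(G *v (axis j 1 + axis k 1)) $ j = c j" "(G *v (axis j 1 + axis k 1)) $ k = c k"
      using c[of j] c[of k] False by (simp_all add: matrix_vector_right_distrib axis_def)
    then show ?thesis using d False by (simp add: axis_def)
  qed simp
  have "G *v v = c j0 *s v" for v j0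
  proof -
    have "(G *v v) $ k = (\<Sum>j\<in>UNIV. if j = k then c k * v $ k else 0)" for k
      unfolding matrix_vector_mult_def vec_lambda_beta by (rule sum.cong) (auto simp: offdiag diag)
    then show ?thesis using c_const by (simp add: vec_eq_iff)
  qed
  then show ?thesis using that by blast
qed

lemma proportional_if_pointwise_proportional:
  fixes A0 A1 :: "complex^'n^'n"
  assumes "invertible A0" "\<And>v. \<exists>c. A1 *v v = c *s (A0 *v v)"
  shows "A1 \<in> cmat.span {A0}"
proof -
  obtain A0' where inv: "A0 ** A0' = mat 1" "A0' ** A0 = mat 1"
    using assms(1) unfolding invertible_def by blast
  have "\<exists>c. (A0' ** A1) *v v = c *s v" for v
    using assms(2)[of v]
    by (metis inv(2) matrix_vector_mul_assoc matrix_vector_mul_lid vector_scalar_commute)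
  then obtain c where c: "\<And>v. (A0' ** A1) *v v = c *s v"
    using mat_eq_scalar_if_all_eigenvectors by blast
  have "A1 *v v = cmat_scale c A0 *v v" for v
    using c[of v] inv(1)
    by (metis cmat_scale_mult_vec matrix_vector_mul_assoc matrix_vector_mul_lid vector_scalar_commute)
  then show ?thesis by (auto simp: matrix_eq cmat_span_singleton)
qed

section \<open>The symmetric bilinear pairing\<close>

definition bdot :: "complex^'n \<Rightarrow> complex^'n \<Rightarrow> complex" where
  "bdot x y = (\<Sum>j\<in>UNIV. x $ j * y $ j)"

lemma bdot_add_left: "bdot (x + x') y = bdot x y + bdot x' y"
  by (simp add: bdot_def distrib_right sum.distrib)

lemma bdot_add_right: "bdot x (y + y') = bdot x y + bdot x y'"
  by (simp add: bdot_def distrib_left sum.distrib)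

lemma bdot_diff_left: "bdot (x - x') y = bdot x y - bdot x' y"
  by (simp add: bdot_def left_diff_distrib sum_subtractf)

lemma bdot_scale_left: "bdot (c *s x) y = c * bdot x y"
  by (simp add: bdot_def sum_distrib_left mult.assoc)

lemma bdot_scale_right: "bdot x (c *s y) = c * bdot x y"
  by (simp add: bdot_def sum_distrib_left algebra_simps)

lemma bdot_zero_left [simp]: "bdot 0 y = 0"
  by (simp add: bdot_def)

lemma bdot_commute: "bdot x y = bdot y x"
  by (simp add: bdot_def mult.commute)

lemma bdot_axis_left: "bdot (axis k 1) y = y $ k"
proof -
  have "bdot (axis k 1) y = (\<Sum>j\<in>UNIV. if j = k then y $ j else 0)"
    unfolding bdot_def axis_def by (rule sum.cong) auto
  then show ?thesis by simp
qed

lemma bdot_nondegenerate: "(\<And>w. bdot w x = 0) \<Longrightarrow> x = 0"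
  by (metis bdot_axis_left vec_eq_iff zero_index)

lemma symmetric_mat_bdot:
  assumes "symmetric_mat A"
  shows "bdot x (A *v y) = bdot (A *v x) y"
proof -
  have A: "A $ i $ j = A $ j $ i" for i j
    using assms unfolding symmetric_mat_def by (metis transpose_def vec_lambda_beta)
  have "bdot x (A *v y) = (\<Sum>i\<in>UNIV. \<Sum>j\<in>UNIV. x$i * (A$i$j * y$j))"
    by (simp add: bdot_def matrix_vector_mult_def sum_distrib_left)
  also have "\<dots> = (\<Sum>j\<in>UNIV. \<Sum>i\<in>UNIV. x$i * (A$i$j * y$j))"
    by (rule sum.swap)
  also have "\<dots> = bdot (A *v x) y"
    by (simp add: bdot_def matrix_vector_mult_def sum_distrib_right sum_distrib_left A mult_ac)
  finally show ?thesis .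
qed

lemma symmetric_mat_quadratic_form_nonzero:
  assumes "symmetric_mat A" "A \<noteq> 0"
  obtains v where "bdot v (A *v v) \<noteq> 0"
proof -
  have "bdot v (A *v w) = 0" if quad0: "\<And>v. bdot v (A *v v) = 0" for v w
  proof -
    have "bdot (v + w) (A *v (v + w)) = bdot v (A *v v) + bdot w (A *v w) + 2 * bdot v (A *v w)"
      using symmetric_mat_bdot[OF assms(1), of w v]
      by (simp add: matrix_vector_right_distrib bdot_add_left bdot_add_right
          bdot_commute[of "A *v v" w] bdot_commute[of "A *v w" v])
    then show ?thesis using quad0 by simp
  qed
  then show ?thesis
    using that assms(2) bdot_nondegenerate by (metis matrix_eq matrix_vector_mult_0)
qed

lemma symmetric_mats_same_line_image_proportional:
  fixes S N :: "complex^'n^'n"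
  assumes "symmetric_mat S" "symmetric_mat N" "y \<noteq> 0" "N \<noteq> 0"
    and S_line: "\<And>w. \<exists>c. S *v w = c *s y" and N_line: "\<And>w. \<exists>c. N *v w = c *s y"
  obtains \<kappa> where "S = cmat_scale \<kappa> N"
proof -
  obtain x0 where "N *v x0 \<noteq> 0" using assms(4) by (metis matrix_eq matrix_vector_mult_0)
  moreover obtain n0 where n0: "N *v x0 = n0 *s y" using N_line by blast
  ultimately have "n0 \<noteq> 0" by auto
  obtain s0 where s0: "S *v x0 = s0 *s y" using S_line by blast
  have "bdot x0 y \<noteq> 0"
  proof
    assume x0y: "bdot x0 y = 0"
    have "n0 * bdot w y = 0" for w
    proof -
      obtain c where c: "N *v w = c *s y" using N_line by blast
      have "n0 * bdot w y = bdot (N *v w) x0"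
        using symmetric_mat_bdot[OF assms(2), of w x0] by (simp add: n0 bdot_scale_right)
      also have "\<dots> = 0" by (simp add: c bdot_scale_left bdot_commute[of y] x0y)
      finally show ?thesis .
    qed
    then show False
      using \<open>n0 \<noteq> 0\<close> assms(3) bdot_nondegenerate by (metis bdot_commute mult_eq_0_iff)
  qed
  have "S *v w = (s0 / n0) *s (N *v w)" for w
  proof -
    obtain a where a: "S *v w = a *s y" using S_line by blast
    obtain b where b: "N *v w = b *s y" using N_line by blast
    have "a * bdot x0 y = bdot (S *v x0) w" "b * bdot x0 y = bdot (N *v x0) w"
      using symmetric_mat_bdot[OF assms(1), of x0 w] symmetric_mat_bdot[OF assms(2), of x0 w]
      by (simp_all add: a b bdot_scale_right)
    then have "a * bdot x0 y = ((s0 / n0) * b) * bdot x0 y"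
      using \<open>n0 \<noteq> 0\<close> by (simp add: s0 n0 bdot_scale_left bdot_commute[of y] field_simps)
    then have "a = (s0 / n0) * b" using \<open>bdot x0 y \<noteq> 0\<close> by (metis mult_right_cancel)
    then show ?thesis by (simp add: a b)
  qed
  then have "S = cmat_scale (s0 / n0) N" by (simp add: matrix_eq cmat_scale_mult_vec)
  then show ?thesis by (rule that)
qed

section \<open>Dimensions one and two\<close>

definition kernels_cover :: "(complex^'n^'n) set \<Rightarrow> bool" where
  "kernels_cover W \<longleftrightarrow> (\<forall>v. \<exists>A\<in>W. A \<noteq> 0 \<and> A *v v = 0)"

lemma not_kernels_cover_dim1:
  assumes "cmat.dim W = 1" "A0 \<in> W" "invertible A0"
  shows "\<not> kernels_cover W"
proof
  assume "kernels_cover W"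
  then obtain B where B: "B \<in> W" "B \<noteq> 0" "B *v axis undefined 1 = 0"
    unfolding kernels_cover_def by blast
  have "W \<subseteq> cmat.span {A0}"
    using assms invertible_nonzero
    by (intro cmat_subset_span_if_card_eq_dim) (auto intro: cmat.independent_insertI)
  with B obtain c where "B = cmat_scale c A0" using cmat_span_singleton by blast
  with B have "A0 *v axis undefined 1 = 0" by (auto simp: cmat_scale_mult_vec)
  then show False using invertible_mult_vec_eq_0[OF assms(3)] by (metis axis_eq_0_iff one_neq_zero)
qed

lemma pencil_kernel_vector_proportional:
  assumes "invertible A0" "B \<in> cmat.span {A1, A0}" "B \<noteq> 0" "B *v v = 0"
  shows "\<exists>c. A1 *v v = c *s (A0 *v v)"
proof -
  obtain \<alpha> \<beta> where B: "B = cmat_scale \<alpha> A1 + cmat_scale \<beta> A0"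
    using assms(2) cmat_span_pair by blast
  have comb: "\<alpha> *s (A1 *v v) + \<beta> *s (A0 *v v) = 0"
    using assms(4) by (simp add: B matrix_vector_mult_add_rdistrib cmat_scale_mult_vec)
  show ?thesis
  proof (cases "\<alpha> = 0")
    case True
    then have "\<beta> \<noteq> 0" using B assms(3) by auto
    then have "v = 0" using comb True invertible_mult_vec_eq_0[OF assms(1)] by simp
    then show ?thesis by auto
  next
    case False
    then show ?thesis
      using vector_solve_combination[OF False comb] by (metis vector_smult_assoc vector_sneg_minus1)
  qed
qed

lemma not_kernels_cover_dim2:
  assumes "cmat.dim W = 2" "A0 \<in> W" "invertible A0"
  shows "\<not> kernels_cover W"
proof
  assume cover: "kernels_cover W"
  obtain A1 where A1: "A1 \<in> W" "A1 \<notin> cmat.span {A0}"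
    using assms(1) cmat_exists_outside_span_singleton[of W A0] by auto
  have W: "W \<subseteq> cmat.span {A1, A0}"
    using assms A1 cmat_independent_pair[OF invertible_nonzero[OF assms(3)] A1(2)]
    by (intro cmat_subset_span_if_card_eq_dim) auto
  have "\<exists>c. A1 *v v = c *s (A0 *v v)" for v
    using cover W pencil_kernel_vector_proportional[OF assms(3)] unfolding kernels_cover_def by blast
  then show False using proportional_if_pointwise_proportional[OF assms(3)] A1(2) by blast
qed

section \<open>Dimension three\<close>

lemma poly_common_nonroot:
  fixes p q :: "complex poly"
  assumes "p \<noteq> 0" "q \<noteq> 0"
  obtains t where "poly p t \<noteq> 0" "poly q t \<noteq> 0"
proof -
  have "finite {t. poly (p * q) t = 0}" using assms by (intro poly_roots_finite) simp
  then obtain t where "poly (p * q) t \<noteq> 0"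
    using ex_new_if_finite[OF infinite_UNIV_char_0] by blast
  then show ?thesis by (intro that) auto
qed

lemma poly_eq_0_if_vanishes_off_0:
  fixes p :: "complex poly"
  assumes "\<And>t. t \<noteq> 0 \<Longrightarrow> poly p t = 0"
  shows "p = 0"
proof (rule ccontr)
  assume "p \<noteq> 0"
  then have "finite {t. poly p t = 0}" by (rule poly_roots_finite)
  moreover have "- {0} \<subseteq> {t. poly p t = 0}" using assms by auto
  ultimately have "finite (- {0 :: complex})" by (rule finite_subset[rotated])
  moreover have "(UNIV :: complex set) = insert 0 (- {0})" by auto
  ultimately show False using infinite_UNIV_char_0 by (metis finite_insert)
qed

locale three_index =
  fixes i1 i2 i3 :: "'n::finite"
  assumes distinct: "i1 \<noteq> i2" "i1 \<noteq> i3" "i2 \<noteq> i3"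
    and UNIV_eq: "(UNIV :: 'n set) = {i1, i2, i3}"
begin

definition rows3 :: "complex^'n \<Rightarrow> complex^'n \<Rightarrow> complex^'n \<Rightarrow> complex^'n^'n" where
  "rows3 x y z = (\<chi> i. if i = i1 then x else if i = i2 then y else z)"

definition det3 :: "complex^'n \<Rightarrow> complex^'n \<Rightarrow> complex^'n \<Rightarrow> complex" where
  "det3 x y z = det (rows3 x y z)"

lemma rows3_at2: "rows3 x y z = (\<chi> i. if i = i2 then y else if i = i1 then x else z)"
  using distinct by (simp add: rows3_def vec_eq_iff)

lemma rows3_at3: "rows3 x y z = (\<chi> i. if i = i3 then z else if i = i1 then x else y)"
  using distinct UNIV_eq by (auto simp add: rows3_def vec_eq_iff)

lemma det3_add1: "det3 (x + x') y z = det3 x y z + det3 x' y z"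
  unfolding det3_def rows3_def
  using det_row_add[of i1 "\<lambda>_. x" "\<lambda>_. x'" "\<lambda>i. if i = i2 then y else z"] by simp

lemma det3_add2: "det3 x (y + y') z = det3 x y z + det3 x y' z"
  unfolding det3_def rows3_at2
  using det_row_add[of i2 "\<lambda>_. y" "\<lambda>_. y'" "\<lambda>i. if i = i1 then x else z"] by simp

lemma det3_add3: "det3 x y (z + z') = det3 x y z + det3 x y z'"
  unfolding det3_def rows3_at3
  using det_row_add[of i3 "\<lambda>_. z" "\<lambda>_. z'" "\<lambda>i. if i = i1 then x else y"] by simp

lemma det3_scale1: "det3 (c *s x) y z = c * det3 x y z"
  unfolding det3_def rows3_def
  using det_row_mul[of i1 c "\<lambda>_. x" "\<lambda>i. if i = i2 then y else z"] by simp

lemma det3_scale2: "det3 x (c *s y) z = c * det3 x y z"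
  unfolding det3_def rows3_at2
  using det_row_mul[of i2 c "\<lambda>_. y" "\<lambda>i. if i = i1 then x else z"] by simp

lemma det3_scale3: "det3 x y (c *s z) = c * det3 x y z"
  unfolding det3_def rows3_at3
  using det_row_mul[of i3 c "\<lambda>_. z" "\<lambda>i. if i = i1 then x else y"] by simp

lemma det3_minus1: "det3 (- x) y z = - det3 x y z"
  using det3_scale1[of "-1" x] by simp

lemma det3_minus2: "det3 x (- y) z = - det3 x y z"
  using det3_scale2[of x "-1" y] by simp

lemma det3_minus3: "det3 x y (- z) = - det3 x y z"
  using det3_scale3[of x y "-1" z] by simp

lemma det3_diff1: "det3 (x - x') y z = det3 x y z - det3 x' y z"
  using det3_add1[of x "- x'"] det3_minus1 by simp

lemma det3_diff2: "det3 x (y - y') z = det3 x y z - det3 x y' z"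
  using det3_add2[of x y "- y'"] det3_minus2 by simp

lemma det3_diff3: "det3 x y (z - z') = det3 x y z - det3 x y z'"
  using det3_add3[of x y z "- z'"] det3_minus3 by simp

lemmas det3_linear = det3_add1 det3_add2 det3_add3 det3_scale1 det3_scale2 det3_scale3
  det3_diff1 det3_diff2 det3_diff3 det3_minus1 det3_minus2 det3_minus3

lemma det3_repeat12: "det3 x x z = 0"
  unfolding det3_def
  by (rule det_identical_rows[OF distinct(1)]) (simp add: rows3_def row_def vec_eq_iff distinct)

lemma det3_repeat13: "det3 x y x = 0"
  unfolding det3_def
  by (rule det_identical_rows[OF distinct(2)])
    (simp add: rows3_def row_def vec_eq_iff distinct(2) distinct(3)[symmetric])

lemma det3_repeat23: "det3 x y y = 0"
  unfolding det3_def
  by (rule det_identical_rows[OF distinct(3)])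
    (simp add: rows3_def row_def vec_eq_iff distinct(3) distinct(1,2)[symmetric])

lemmas det3_repeat = det3_repeat12 det3_repeat13 det3_repeat23

lemma det3_swap12: "det3 y x z = - det3 x y z"
proof -
  have "det3 (x + y) (x + y) z = det3 x y z + det3 y x z"
    by (simp add: det3_add1 det3_add2 det3_repeat12[of x] det3_repeat12[of y])
  with det3_repeat12[of "x + y" z] show ?thesis by (metis add.commute eq_neg_iff_add_eq_0)
qed

lemma det3_swap23: "det3 x z y = - det3 x y z"
proof -
  have "det3 x (y + z) (y + z) = det3 x y z + det3 x z y"
    by (simp add: det3_add2 det3_add3 det3_repeat23[of x y] det3_repeat23[of x z])
  with det3_repeat23[of x "y + z"] show ?thesis by (metis add.commute eq_neg_iff_add_eq_0)
qed

lemma det3_swap13: "det3 z y x = - det3 x y z"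
proof -
  have "det3 (x + z) y (x + z) = det3 x y z + det3 z y x"
    by (simp add: det3_add1 det3_add3 det3_repeat13[of x] det3_repeat13[of z])
  with det3_repeat13[of "x + z" y] show ?thesis by (metis add.commute eq_neg_iff_add_eq_0)
qed

lemma det3_axes: "det3 (axis i1 1) (axis i2 1) (axis i3 1) = 1"
proof -
  have "rows3 (axis i1 1) (axis i2 1) (axis i3 1) = mat 1"
    using distinct UNIV_eq by (auto simp: rows3_def mat_def vec_eq_iff axis_def)
  then show ?thesis by (simp add: det3_def)
qed

lemma sum_UNIV3: "(\<Sum>i\<in>UNIV. f i) = f i1 + f i2 + (f i3 :: 'a::comm_monoid_add)"
  using distinct by (simp add: UNIV_eq add.assoc)

lemma vector_expand_axes:
  "(w::complex^'n) = w $ i1 *s axis i1 1 + w $ i2 *s axis i2 1 + w $ i3 *s axis i3 1"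
  using distinct UNIV_eq by (auto simp: vec_eq_iff axis_def)

lemma det3_spanning:
  assumes "det3 x y z \<noteq> 0"
  obtains \<alpha> \<beta> \<gamma> where "w = \<alpha> *s x + \<beta> *s y + \<gamma> *s z"
proof -
  have "invertible (transpose (rows3 x y z))"
    using assms by (simp add: det3_def invertible_det_nz)
  then obtain c where c: "transpose (rows3 x y z) *v c = w"
    by (metis invertible_eq_bij bij_is_surj surjD)
  have "transpose (rows3 x y z) *v c = c $ i1 *s x + c $ i2 *s y + c $ i3 *s z"
    unfolding matrix_vector_column transpose_transpose sum_UNIV3
    using distinct by (simp add: rows3_def)
  then show ?thesis using c that by metis
qed

lemma det3_eq_0_if_dependent:
  assumes "\<alpha> *s x + \<beta> *s y + \<gamma> *s z = 0" "\<alpha> \<noteq> 0 \<or> \<beta> \<noteq> 0 \<or> \<gamma> \<noteq> 0"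
  shows "det3 x y z = 0"
proof -
  consider "\<alpha> \<noteq> 0" | "\<beta> \<noteq> 0" | "\<gamma> \<noteq> 0" using assms(2) by blast
  then show ?thesis
  proof cases
    case 1
    have "\<alpha> *s x + (\<beta> *s y + \<gamma> *s z) = 0" using assms(1) by (simp add: add.assoc)
    from vector_solve_combination[OF 1 this] show ?thesis by (simp add: det3_linear det3_repeat)
  next
    case 2
    have "\<beta> *s y + (\<alpha> *s x + \<gamma> *s z) = 0" using assms(1) by (simp add: algebra_simps)
    from vector_solve_combination[OF 2 this] show ?thesis by (simp add: det3_linear det3_repeat)
  next
    case 3
    have "\<gamma> *s z + (\<alpha> *s x + \<beta> *s y) = 0" using assms(1) by (simp add: algebra_simps)
    from vector_solve_combination[OF 3 this] show ?thesis by (simp add: det3_linear det3_repeat)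
  qed
qed

lemma det3_nonzero_completion:
  assumes "y \<noteq> 0"
  obtains p q where "det3 p q y \<noteq> 0"
proof -
  let ?e1 = "axis i1 1 :: complex^'n" and ?e2 = "axis i2 1" and ?e3 = "axis i3 1"
  have "det3 ?e2 ?e3 ?e1 = 1" "det3 ?e3 ?e1 ?e2 = 1"
    using det3_swap13[of ?e1 ?e3 ?e2] det3_swap12[of ?e1 ?e3 ?e2] det3_swap23[of ?e1 ?e2 ?e3] det3_axes
    by simp_all
  then have "det3 ?e1 ?e2 y = y $ i3" "det3 ?e2 ?e3 y = y $ i1" "det3 ?e3 ?e1 y = y $ i2"
    by (subst vector_expand_axes[of y]; simp add: det3_linear det3_repeat det3_axes)+
  moreover have "y $ i1 \<noteq> 0 \<or> y $ i2 \<noteq> 0 \<or> y $ i3 \<noteq> 0"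
    using assms vector_expand_axes[of y] by auto
  ultimately show ?thesis using that by metis
qed

lemma parallel_if_det3_eq_0:
  assumes "y \<noteq> 0" "\<And>x. det3 x a y = 0"
  obtains \<beta> where "a = \<beta> *s y"
proof -
  obtain p q where pq: "det3 p q y \<noteq> 0" using det3_nonzero_completion assms(1) by blast
  obtain \<alpha> \<beta> \<gamma> where a: "a = \<alpha> *s p + \<beta> *s q + \<gamma> *s y" using det3_spanning[OF pq] by blast
  have "det3 q a y = - \<alpha> * det3 p q y" "det3 p a y = \<beta> * det3 p q y"
    using det3_swap12[of p q y] by (simp_all add: a det3_linear det3_repeat)
  then have "\<alpha> = 0" "\<beta> = 0" using assms(2) pq by simp_all
  then show ?thesis using a that[of \<gamma>] by simp
qed

definition cross :: "complex^'n \<Rightarrow> complex^'n \<Rightarrow> complex^'n" where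
  "cross x y = (\<chi> k. det3 x y (axis k 1))"

lemma bdot_cross: "bdot (cross x y) z = det3 x y z"
proof -
  have "det3 x y z = z $ i1 * det3 x y (axis i1 1) + z $ i2 * det3 x y (axis i2 1)
      + z $ i3 * det3 x y (axis i3 1)"
    by (subst vector_expand_axes[of z]) (simp add: det3_linear)
  then show ?thesis by (simp add: bdot_def cross_def sum_UNIV3 mult.commute)
qed

lemma eq_0_if_bdot_spanning:
  assumes "det3 a b c \<noteq> 0" "bdot x a = 0" "bdot x b = 0" "bdot x c = 0"
  shows "x = 0"
proof (rule bdot_nondegenerate)
  fix w
  obtain \<alpha> \<beta> \<gamma> where "w = \<alpha> *s a + \<beta> *s b + \<gamma> *s c" using det3_spanning[OF assms(1)] by blast
  then show "bdot w x = 0"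
    using assms(2-4)
    by (simp add: bdot_add_left bdot_scale_left
        bdot_commute[of a x] bdot_commute[of b x] bdot_commute[of c x])
qed

lemma symmetric_mat_image_line_if_kernel_pair:
  assumes "symmetric_mat N" "N *v v = 0" "N *v z = 0" "det3 v z r \<noteq> 0"
  shows "cross v z \<noteq> 0" "\<And>w. \<exists>c. N *v w = c *s cross v z"
proof -
  let ?y = "cross v z"
  have y: "bdot ?y v = 0" "bdot ?y z = 0" "bdot ?y r \<noteq> 0"
    using assms(4) by (simp_all add: bdot_cross det3_repeat)
  then show "?y \<noteq> 0" by auto
  fix w
  let ?c = "bdot (N *v w) r / bdot ?y r"
  have "bdot (N *v w) v = 0" "bdot (N *v w) z = 0"
    using symmetric_mat_bdot[OF assms(1), of v w] symmetric_mat_bdot[OF assms(1), of z w] assms(2,3)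
    by (simp_all add: bdot_commute[of _ v] bdot_commute[of _ z])
  then have "N *v w - ?c *s ?y = 0"
    using y by (intro eq_0_if_bdot_spanning[OF assms(4)]) (simp_all add: bdot_diff_left bdot_scale_left)
  then show "\<exists>c. N *v w = c *s ?y" by (metis eq_iff_diff_eq_0)
qed

lemma det3_pencil_at_0:
  assumes "\<And>t. t \<noteq> 0 \<Longrightarrow> det3 (a + t *s a') (b + t *s b') n = 0"
  shows "det3 a b n = 0"
proof -
  let ?p = "[:det3 a b n, det3 a' b n + det3 a b' n, det3 a' b' n:]"
  have "poly ?p t = det3 (a + t *s a') (b + t *s b') n" for t
    by (simp add: det3_linear algebra_simps)
  then have "?p = 0" using assms by (intro poly_eq_0_if_vanishes_off_0) simp
  then show ?thesis by simp
qed

(* The hypothesis says G a \<in> span {a, y} for every a: on the quotient by span {y}, every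
  vector is an eigenvector of G. *)
lemma scalar_modulo_line:
  fixes G :: "complex^'n^'n"
  assumes "y \<noteq> 0" and isotropic: "\<And>a. det3 a (G *v a) y = 0"
  obtains \<mu> where "\<And>x. \<exists>c. G *v x = \<mu> *s x + c *s y"
proof -
  have polar: "det3 a (G *v b) y + det3 b (G *v a) y = 0" for a b
  proof -
    have "det3 (a + b) (G *v (a + b)) y = det3 a (G *v a) y + det3 b (G *v b) y
        + (det3 a (G *v b) y + det3 b (G *v a) y)"
      by (simp add: matrix_vector_right_distrib det3_add1 det3_add2)
    then show ?thesis using isotropic by simp
  qed
  obtain p q where pq: "det3 p q y \<noteq> 0" using det3_nonzero_completion[OF assms(1)] by blast
  obtain a1 b1 c1 where Gp: "G *v p = a1 *s p + b1 *s q + c1 *s y" using det3_spanning[OF pq] by blast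
  obtain a2 b2 c2 where Gq: "G *v q = a2 *s p + b2 *s q + c2 *s y" using det3_spanning[OF pq] by blast
  obtain a3 b3 c3 where Gy: "G *v y = a3 *s p + b3 *s q + c3 *s y" using det3_spanning[OF pq] by blast
  have "b1 * det3 p q y = 0" using isotropic[of p] by (simp add: Gp det3_linear det3_repeat)
  moreover have "a2 * det3 p q y = 0"
    using isotropic[of q] det3_swap12[of p q y] by (simp add: Gq det3_linear det3_repeat)
  moreover have "(b2 - a1) * det3 p q y = 0"
    using polar[of p q] det3_swap12[of p q y] by (simp add: Gp Gq det3_linear det3_repeat algebra_simps)
  moreover have "b3 * det3 p q y = 0" using polar[of p y] by (simp add: Gp Gy det3_linear det3_repeat)
  moreover have "a3 * det3 p q y = 0"
    using polar[of q y] det3_swap12[of p q y] by (simp add: Gq Gy det3_linear det3_repeat)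
  ultimately have coeffs: "b1 = 0" "a2 = 0" "b2 = a1" "b3 = 0" "a3 = 0" using pq by simp_all
  show ?thesis
  proof (rule that[of a1])
    fix x
    obtain \<alpha> \<beta> \<gamma> where x: "x = \<alpha> *s p + \<beta> *s q + \<gamma> *s y" using det3_spanning[OF pq] by blast
    have "G *v x = a1 *s x + (\<alpha> * c1 + \<beta> * c2 + \<gamma> * (c3 - a1)) *s y"
      using coeffs by (simp add: x matrix_vector_right_distrib vector_scalar_commute Gp Gq Gy
          vec_eq_iff algebra_simps)
    then show "\<exists>c. G *v x = a1 *s x + c *s y" by blast
  qed
qed

lemma pencil_member_with_line_image:
  assumes "invertible A0" "y \<noteq> 0" "\<And>v. det3 (A0 *v v) (A1 *v v) y = 0"
  obtains \<mu> where "\<And>w. \<exists>c. (A1 - cmat_scale \<mu> A0) *v w = c *s y"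
proof -
  obtain A0' where inv: "A0 ** A0' = mat 1" "A0' ** A0 = mat 1"
    using assms(1) unfolding invertible_def by blast
  let ?G = "A1 ** A0'"
  have G_A0: "?G *v (A0 *v w) = A1 *v w" for w
    by (simp add: matrix_vector_mul_assoc matrix_mul_assoc[symmetric] inv(2))
  have "det3 a (?G *v a) y = 0" for a
    using assms(3)[of "A0' *v a"] by (simp add: matrix_vector_mul_assoc inv(1))
  then obtain \<mu> where \<mu>: "\<And>x. \<exists>c. ?G *v x = \<mu> *s x + c *s y"
    using scalar_modulo_line[OF assms(2)] by blast
  show ?thesis
  proof (rule that[of \<mu>])
    fix w
    obtain c where "?G *v (A0 *v w) = \<mu> *s (A0 *v w) + c *s y" using \<mu> by blast
    then have "(A1 - cmat_scale \<mu> A0) *v w = c *s y"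
      by (simp add: G_A0 matrix_vector_mult_diff_rdistrib cmat_scale_mult_vec)
    then show "\<exists>c. (A1 - cmat_scale \<mu> A0) *v w = c *s y" by blast
  qed
qed

lemma pencil_images_independent_somewhere:
  assumes "invertible A0" "A1 \<notin> cmat.span {A0}"
  obtains v r where "det3 (A0 *v v) (A1 *v v) r \<noteq> 0"
proof -
  have "\<not> (\<forall>v r. det3 (A0 *v v) (A1 *v v) r = 0)"
  proof
    assume degenerate: "\<forall>v r. det3 (A0 *v v) (A1 *v v) r = 0"
    have "\<exists>c. A1 *v v = c *s (A0 *v v)" for v
    proof (cases "v = 0")
      case False
      then have "A0 *v v \<noteq> 0" using invertible_mult_vec_eq_0[OF assms(1)] by blast
      moreover have "det3 x (A1 *v v) (A0 *v v) = 0" for x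
        using degenerate det3_swap13[of "A0 *v v" "A1 *v v" x] by simp
      ultimately show ?thesis using parallel_if_det3_eq_0 by metis
    qed simp
    then show False using proportional_if_pointwise_proportional[OF assms(1)] assms(2) by blast
  qed
  then show ?thesis using that by blast
qed

lemma generic_pencil_vector:
  assumes "det3 (A0 *v v1) (A1 *v v1) r \<noteq> 0" "bdot v2 (A0 *v v2) \<noteq> 0"
  obtains v where "det3 (A0 *v v) (A1 *v v) r \<noteq> 0" "bdot v (A0 *v v) \<noteq> 0"
proof -
  define f where "f = [:det3 (A0 *v v1) (A1 *v v1) r,
    det3 (A0 *v v2) (A1 *v v1) r + det3 (A0 *v v1) (A1 *v v2) r, det3 (A0 *v v2) (A1 *v v2) r:]"
  define g where "g = [:bdot v1 (A0 *v v1),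
    bdot v1 (A0 *v v2) + bdot v2 (A0 *v v1), bdot v2 (A0 *v v2):]"
  have f: "poly f t = det3 (A0 *v (v1 + t *s v2)) (A1 *v (v1 + t *s v2)) r" for t
    by (simp add: f_def matrix_vector_right_distrib vector_scalar_commute det3_linear algebra_simps)
  have g: "poly g t = bdot (v1 + t *s v2) (A0 *v (v1 + t *s v2))" for t
    by (simp add: g_def matrix_vector_right_distrib vector_scalar_commute
        bdot_add_left bdot_add_right bdot_scale_left bdot_scale_right algebra_simps)
  have "f \<noteq> 0" "g \<noteq> 0" using assms by (simp_all add: f_def g_def)
  then obtain t where "poly f t \<noteq> 0" "poly g t \<noteq> 0" by (rule poly_common_nonroot)
  then show ?thesis using that[of "v1 + t *s v2"] by (simp add: f g)
qed

lemma kernel_member_outside_pencil: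
  assumes "det3 (A0 *v v0) (A1 *v v0) r \<noteq> 0" "N *v v0 = 0" "N \<noteq> 0"
  shows "N \<notin> cmat.span {A1, A0}"
proof
  assume "N \<in> cmat.span {A1, A0}"
  then obtain \<beta> \<alpha> where N: "N = cmat_scale \<beta> A1 + cmat_scale \<alpha> A0" using cmat_span_pair by blast
  then have "\<alpha> *s (A0 *v v0) + \<beta> *s (A1 *v v0) + 0 *s r = 0"
    using assms(2) by (simp add: matrix_vector_mult_add_rdistrib cmat_scale_mult_vec add.commute)
  moreover have "\<alpha> \<noteq> 0 \<or> \<beta> \<noteq> 0" using N assms(3) by auto
  ultimately show False using det3_eq_0_if_dependent assms(1) by blast
qed

lemma det3_degenerate_if_kernels_cover:
  assumes "kernels_cover W" "W \<subseteq> cmat.span {N, A1, A0}"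
  shows "det3 (A0 *v v) (A1 *v v) (N *v v) = 0"
proof -
  obtain B where B: "B \<in> W" "B \<noteq> 0" "B *v v = 0"
    using assms(1) unfolding kernels_cover_def by blast
  then obtain \<gamma> \<beta> \<alpha> where B_eq: "B = cmat_scale \<gamma> N + cmat_scale \<beta> A1 + cmat_scale \<alpha> A0"
    using assms(2) cmat_span_triple by blast
  have "\<alpha> *s (A0 *v v) + \<beta> *s (A1 *v v) + \<gamma> *s (N *v v) = 0"
    using B(3) by (simp add: B_eq matrix_vector_mult_add_rdistrib cmat_scale_mult_vec algebra_simps)
  moreover have "\<alpha> \<noteq> 0 \<or> \<beta> \<noteq> 0 \<or> \<gamma> \<noteq> 0" using B_eq B(2) by auto
  ultimately show ?thesis by (rule det3_eq_0_if_dependent)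
qed

lemma kernel_member_line_image:
  assumes "symmetric_mat N" "N *v v0 = 0"
    and degenerate: "\<And>v. det3 (A0 *v v) (A1 *v v) (N *v v) = 0"
    and "det3 (A0 *v v0) (A1 *v v0) r \<noteq> 0" "bdot v0 (A0 *v v0) \<noteq> 0"
  obtains y where "y \<noteq> 0" "\<And>w. \<exists>c. N *v w = c *s y"
proof -
  let ?a = "A0 *v v0" and ?b = "A1 *v v0"
  define z where "z = cross ?a ?b"
  have image_orth: "det3 ?a ?b (N *v w) = 0" for w
  proof (rule det3_pencil_at_0[of _ "A0 *v w" _ "A1 *v w"])
    fix t :: complex assume "t \<noteq> 0"
    have "t * det3 (?a + t *s (A0 *v w)) (?b + t *s (A1 *v w)) (N *v w) = 0"
      using degenerate[of "v0 + t *s w"] assms(2)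
      by (simp add: matrix_vector_right_distrib vector_scalar_commute det3_scale3)
    then show "det3 (?a + t *s (A0 *v w)) (?b + t *s (A1 *v w)) (N *v w) = 0"
      using \<open>t \<noteq> 0\<close> by simp
  qed
  have "N *v z = 0"
  proof (rule bdot_nondegenerate)
    fix w
    show "bdot w (N *v z) = 0"
      using symmetric_mat_bdot[OF assms(1), of w z] image_orth[of w]
      by (simp add: bdot_commute[of "N *v w"] z_def bdot_cross)
  qed
  have "z \<noteq> 0" using assms(4) bdot_cross[of ?a ?b r] by (auto simp: z_def)
  have "\<exists>r'. det3 v0 z r' \<noteq> 0"
  proof (rule ccontr)
    assume "\<nexists>r'. det3 v0 z r' \<noteq> 0"
    then have "det3 x z v0 = 0" for x using det3_swap13[of v0 z x] by auto
    moreover have "v0 \<noteq> 0" using assms(5) by auto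
    ultimately obtain \<beta> where z: "z = \<beta> *s v0" using parallel_if_det3_eq_0 by blast
    have "\<beta> * bdot v0 ?a = bdot z ?a" by (simp add: z bdot_scale_left)
    also have "\<dots> = 0" by (simp add: z_def bdot_cross det3_repeat)
    finally show False using assms(5) \<open>z \<noteq> 0\<close> z by simp
  qed
  then obtain r' where "det3 v0 z r' \<noteq> 0" by blast
  from symmetric_mat_image_line_if_kernel_pair[OF assms(1,2) \<open>N *v z = 0\<close> this] show ?thesis
    using that by blast
qed

lemma det3_vanishes_at_line:
  assumes "N \<noteq> 0" "\<And>w. \<exists>c. N *v w = c *s y"
    and degenerate: "\<And>v. det3 (A0 *v v) (A1 *v v) (N *v v) = 0"
  shows "det3 (A0 *v v) (A1 *v v) y = 0"
proof -
  have off_kernel: "det3 (A0 *v v) (A1 *v v) y = 0" if "N *v v \<noteq> 0" for v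
  proof -
    obtain c where c: "N *v v = c *s y" using assms(2) by blast
    then have "c * det3 (A0 *v v) (A1 *v v) y = 0" using degenerate[of v] by (simp add: det3_scale3)
    then show ?thesis using that c by auto
  qed
  obtain x0 where x0: "N *v x0 \<noteq> 0" using assms(1) by (metis matrix_eq matrix_vector_mult_0)
  show ?thesis
  proof (cases "N *v v = 0")
    case True
    show ?thesis
    proof (rule det3_pencil_at_0[of _ "A0 *v x0" _ "A1 *v x0"])
      fix t :: complex assume "t \<noteq> 0"
      then have "N *v (v + t *s x0) \<noteq> 0" using True x0
        by (simp add: matrix_vector_right_distrib vector_scalar_commute)
      from off_kernel[OF this]
      show "det3 (A0 *v v + t *s (A0 *v x0)) (A1 *v v + t *s (A1 *v x0)) y = 0"
        by (simp add: matrix_vector_right_distrib vector_scalar_commute)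
    qed
  qed (rule off_kernel)
qed

lemma not_kernels_cover_dim3:
  fixes W :: "(complex^'n^'n) set"
  assumes W: "cmat.subspace W" "cmat.dim W = 3" "\<forall>A\<in>W. symmetric_mat A"
    and A0: "A0 \<in> W" "invertible A0"
  shows "\<not> kernels_cover W"
proof
  assume cover: "kernels_cover W"
  have "A0 \<noteq> 0" using A0(2) by (rule invertible_nonzero)
  obtain A1 where A1: "A1 \<in> W" "A1 \<notin> cmat.span {A0}"
    using W(2) cmat_exists_outside_span_singleton[of W A0] by auto
  obtain v1 r where "det3 (A0 *v v1) (A1 *v v1) r \<noteq> 0"
    using pencil_images_independent_somewhere[OF A0(2) A1(2)] by blast
  moreover obtain v2 where "bdot v2 (A0 *v v2) \<noteq> 0"
    using symmetric_mat_quadratic_form_nonzero W(3) A0(1) \<open>A0 \<noteq> 0\<close> by blast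
  ultimately obtain v0 where v0: "det3 (A0 *v v0) (A1 *v v0) r \<noteq> 0" "bdot v0 (A0 *v v0) \<noteq> 0"
    by (rule generic_pencil_vector)
  obtain N where N: "N \<in> W" "N \<noteq> 0" "N *v v0 = 0" using cover unfolding kernels_cover_def by blast
  have N_new: "N \<notin> cmat.span {A1, A0}"
    using kernel_member_outside_pencil[OF v0(1) N(3,2)] .
  have "W \<subseteq> cmat.span {N, A1, A0}"
    using cmat_subset_span_triple[OF W(2) \<open>A0 \<noteq> 0\<close> A1(2) N_new] N(1) A1(1) A0(1) .
  then have degenerate: "\<And>v. det3 (A0 *v v) (A1 *v v) (N *v v) = 0"
    using cover det3_degenerate_if_kernels_cover by blast
  obtain y where y: "y \<noteq> 0" "\<And>w. \<exists>c. N *v w = c *s y"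
    using kernel_member_line_image[OF _ N(3) degenerate v0] W(3) N(1) by blast
  then obtain \<mu> where S: "\<And>w. \<exists>c. (A1 - cmat_scale \<mu> A0) *v w = c *s y"
    using pencil_member_with_line_image[OF A0(2) y(1)] det3_vanishes_at_line[OF N(2) y(2) degenerate]
    by blast
  have "A1 - cmat_scale \<mu> A0 \<in> W"
    using W(1) A1(1) A0(1) by (intro cmat.subspace_diff cmat.subspace_scale)
  then obtain \<kappa> where \<kappa>: "A1 - cmat_scale \<mu> A0 = cmat_scale \<kappa> N"
    using symmetric_mats_same_line_image_proportional[OF _ _ y(1) N(2) S y(2)] W(3) N(1) by blast
  show False
  proof (cases "\<kappa> = 0")
    case True
    then have "A1 = cmat_scale \<mu> A0" using \<kappa> by simp
    then show False using A1(2) by (auto simp: cmat_span_singleton)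
  next
    case False
    then have "N = cmat_scale (1 / \<kappa>) A1 + cmat_scale (- \<mu> / \<kappa>) A0"
      using \<kappa> by (simp add: cmat_scale_def vec_eq_iff field_simps)
    then show False using N_new cmat_span_pair by blast
  qed
qed

end

theorem lemma6p1:
  fixes W :: "(complex^'n^'n) set"
  assumes "CARD('n) \<le> 3"
    and "cmat.subspace W"
    and "cmat.dim W = CARD('n)"
    and "\<forall>A\<in>W. symmetric_mat A"
    and "\<exists>A\<in>W. invertible A"
  shows "\<exists>v :: complex^'n. \<forall>A\<in>W. A \<noteq> 0 \<longrightarrow> v \<notin> qf_kernel A"
proof -
  obtain A0 where A0: "A0 \<in> W" "invertible A0" using assms(5) by blast
  have "\<not> kernels_cover W"
  proof -
    consider "CARD('n) = 1" | "CARD('n) = 2" | "CARD('n) = 3"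
      using assms(1) zero_less_card_finite[where 'a='n] by linarith
    then show ?thesis
    proof cases
      case 1
      then show ?thesis using not_kernels_cover_dim1 assms(3) A0 by simp
    next
      case 2
      then show ?thesis using not_kernels_cover_dim2 assms(3) A0 by simp
    next
      case 3
      then obtain i1 i2 i3 :: 'n where "(UNIV :: 'n set) = {i1, i2, i3}" "i1 \<noteq> i2" "i2 \<noteq> i3" "i1 \<noteq> i3"
        unfolding card_3_iff by blast
      then interpret three_index i1 i2 i3 by unfold_locales auto
      show ?thesis using not_kernels_cover_dim3 assms(2,3,4) A0 3 by simp
    qed
  qed
  then show ?thesis by (auto simp: kernels_cover_def qf_kernel_def)
qed

end
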